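(* Let $d_n$ be the number of equivalence classes of $n$-diagrams under the action of the dihedral group $D_{2n}$ of order $4n$ (the symmetry group of the $2n$-gon acting on its vertex set $[2n]$). Then $d_n\ge \underline{d}_n := (4n)^{-1}(2n-1)!!$ for $n\ge1$, and \[ d_n \sim \frac{(2n-1)!!}{4n} \quad \text{as } n\to\infty. \]
   Context: A chord diagram of order $n$ (an $n$-diagram) is a 3-regular graph on vertex set $[2n]=\{1,\dots,2n\}$ containing the $2n$-circuit $\Delta_{2n}=(1\,2\,\dots\,2n)$ as a subgraph; the edges not in $\Delta_{2n}$ are the chords (they form a perfect matching of $[2n]$). Given a group $G$ of permutations of $[2n]$ acting on $\Delta_{2n}$, two $n$-diagrams are equivalent if some $g\in G$ takes the chords of the first onto the chords of the second. *)

theory Defs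
  imports Main "HOL-Library.Landau_Symbols"
begin

text \<open>The chords of an n-diagram: a perfect matching of the vertex set [2n] = {1..2n}.
  (Chords may join cyclically adjacent vertices; the diagram is then a multigraph.)\<close>
definition chord_sets :: "nat \<Rightarrow> nat set set set" where
  "chord_sets n = {M. (\<forall>e\<in>M. e \<subseteq> {1..2*n} \<and> card e = 2) \<and>
                      (\<forall>v\<in>{1..2*n}. \<exists>!e\<in>M. v \<in> e)}"

definition rot :: "nat \<Rightarrow> nat \<Rightarrow> nat \<Rightarrow> nat" where
  "rot n k i = (i - 1 + k) mod (2*n) + 1"

definition refl :: "nat \<Rightarrow> nat \<Rightarrow> nat \<Rightarrow> nat" where
  "refl n k i = (2*n - (i - 1) + k) mod (2*n) + 1"

definition dihedral :: "nat \<Rightarrow> (nat \<Rightarrow> nat) set" where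
  "dihedral n = {rot n k | k. k < 2*n} \<union> {refl n k | k. k < 2*n}"

definition diagram_equiv :: "nat \<Rightarrow> (nat set set \<times> nat set set) set" where
  "diagram_equiv n = {(M, M'). M \<in> chord_sets n \<and> M' \<in> chord_sets n \<and>
                         (\<exists>g\<in>dihedral n. (\<lambda>e. g ` e) ` M = M')}"

definition d_num :: "nat \<Rightarrow> nat" where
  "d_num n = card (chord_sets n // diagram_equiv n)"

definition odd_dfact :: "nat \<Rightarrow> nat" where
  "odd_dfact n = (\<Prod>i<n. 2*i + 1)"

end

(*
  Every class of n-diagrams is the orbit of a diagram under D_2n, so it has at most 4n
  elements; this gives d_n >= (2n-1)!!/(4n). A class has exactly 4n elements unless its
  diagrams are fixed by a non-identity symmetry. Such a symmetry fixes at most two of the 2n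
  vertices, and a permutation of 2m points with at most two fixed points leaves at most a_m
  perfect matchings invariant, where a_(m+2) = a_(m+1) + (2m+4) a_m. Hence
  (2n-1)!!/(4n) <= d_n <= (2n-1)!!/(4n) + 4n a_n, and n^2 a_n/(2n-1)!! tends to 0 because
  a_(m+2) <= (4m+7) a_m while (2m+3)!! = (2m+1)(2m+3) (2m-1)!!.
*)
theory Submission
  imports Defs "HOL-Real_Asymp.Real_Asymp"
begin

definition perfect_matchings :: "'a set \<Rightarrow> 'a set set set" where
  "perfect_matchings V =
     {M. (\<forall>e\<in>M. e \<subseteq> V \<and> card e = 2) \<and> (\<forall>v\<in>V. \<exists>!e\<in>M. v \<in> e)}"

lemma chord_sets_eq_perfect_matchings: "chord_sets n = perfect_matchings {1..2*n}"
  unfolding chord_sets_def perfect_matchings_def by simp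

context
  fixes M V
  assumes M: "M \<in> perfect_matchings V"
begin

lemma perfect_matching_subset: "e \<in> M \<Longrightarrow> e \<subseteq> V"
  and perfect_matching_card: "e \<in> M \<Longrightarrow> card e = 2"
  using M unfolding perfect_matchings_def by auto

lemma perfect_matching_Pow: "M \<subseteq> Pow V"
  using perfect_matching_subset by blast

lemma perfect_matching_unique: "e \<in> M \<Longrightarrow> e' \<in> M \<Longrightarrow> x \<in> e \<Longrightarrow> x \<in> e' \<Longrightarrow> e = e'"
  using M unfolding perfect_matchings_def by blast

lemma perfect_matching_cover: "v \<in> V \<Longrightarrow> \<exists>e\<in>M. v \<in> e"
  using M unfolding perfect_matchings_def by blast

lemma perfect_matching_partner:
  assumes "e \<in> M" "v \<in> e"
  shows "\<exists>p\<in>V. p \<noteq> v \<and> e = {v, p}"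
proof -
  obtain a b where "e = {a, b}" "a \<noteq> b"
    using perfect_matching_card[OF assms(1)] by (auto simp: card_2_iff)
  then show ?thesis using assms perfect_matching_subset[OF assms(1)] by auto
qed

lemma perfect_matching_Diff:
  assumes "C \<subseteq> M"
  shows "M - C \<in> perfect_matchings (V - \<Union>C)"
  unfolding perfect_matchings_def
proof (intro CollectI conjI ballI)
  fix e assume e: "e \<in> M - C"
  then show "e \<subseteq> V - \<Union>C"
    using assms perfect_matching_subset perfect_matching_unique by blast
  show "card e = 2" using e perfect_matching_card by blast
next
  fix v assume v: "v \<in> V - \<Union>C"
  then obtain e where "e \<in> M" "v \<in> e" using perfect_matching_cover by blast
  with v show "\<exists>!e\<in>M - C. v \<in> e" using perfect_matching_unique by blast
qed

end

lemma finite_perfect_matchings: "finite V \<Longrightarrow> finite (perfect_matchings V)"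
proof (rule finite_subset)
  show "perfect_matchings V \<subseteq> Pow (Pow V)" using perfect_matching_Pow by blast
qed simp

lemma perfect_matchings_empty: "perfect_matchings {} = {{}}"
proof -
  have "M = {}" if "M \<in> perfect_matchings {}" for M
    using perfect_matching_subset[OF that] perfect_matching_card[OF that] by fastforce
  then show ?thesis by (auto simp: perfect_matchings_def)
qed

lemma perfect_matchings_insert:
  assumes M: "M \<in> perfect_matchings (V - {v, p})" and "v \<in> V" "p \<in> V" "v \<noteq> p"
  shows "insert {v, p} M \<in> perfect_matchings V"
  unfolding perfect_matchings_def
proof (intro CollectI conjI ballI)
  fix e assume "e \<in> insert {v, p} M"
  then show "e \<subseteq> V" "card e = 2"
    using assms(2-4) perfect_matching_subset[OF M] perfect_matching_card[OF M] by auto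
next
  fix x assume x: "x \<in> V"
  show "\<exists>!e\<in>insert {v, p} M. x \<in> e"
  proof (cases "x = v \<or> x = p")
    case True
    then show ?thesis using perfect_matching_subset[OF M] by auto
  next
    case False
    then obtain e where "e \<in> M" "x \<in> e" using x perfect_matching_cover[OF M, of x] by blast
    then show ?thesis using perfect_matching_unique[OF M] False by blast
  qed
qed

lemma odd_dfact_Suc: "odd_dfact (Suc m) = (2*m + 1) * odd_dfact m"
  unfolding odd_dfact_def by simp

lemma odd_dfact_pos: "odd_dfact m > 0"
  unfolding odd_dfact_def by (simp add: prod_pos)

lemma perfect_matchings_through_vertex:
  assumes "v \<in> V"
  shows "perfect_matchings V = (\<Union>p\<in>V - {v}. {M \<in> perfect_matchings V. {v, p} \<in> M})"
proof (intro subset_antisym subsetI)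
  fix M assume M: "M \<in> perfect_matchings V"
  obtain e where e: "e \<in> M" "v \<in> e" using perfect_matching_cover[OF M assms] by blast
  then obtain p where "p \<in> V" "p \<noteq> v" "e = {v, p}"
    using perfect_matching_partner[OF M] by blast
  with M e show "M \<in> (\<Union>p\<in>V - {v}. {M \<in> perfect_matchings V. {v, p} \<in> M})" by blast
qed auto

lemma bij_betw_remove_chord:
  assumes "v \<in> V" "p \<in> V" "v \<noteq> p"
  shows "bij_betw (\<lambda>M. M - {{v, p}}) {M \<in> perfect_matchings V. {v, p} \<in> M}
           (perfect_matchings (V - {v, p}))"
proof (rule bij_betw_byWitness[where f' = "insert {v, p}"])
  show "(\<lambda>M. M - {{v, p}}) ` {M \<in> perfect_matchings V. {v, p} \<in> M} \<subseteq> perfect_matchings (V - {v, p})"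
    using perfect_matching_Diff[of _ V "{{v, p}}"] by auto
  show "insert {v, p} ` perfect_matchings (V - {v, p}) \<subseteq> {M \<in> perfect_matchings V. {v, p} \<in> M}"
    using perfect_matchings_insert[of _ V v p] assms by auto
  show "\<forall>M\<in>perfect_matchings (V - {v, p}). insert {v, p} M - {{v, p}} = M"
    using perfect_matching_subset by fastforce
qed auto

lemma card_perfect_matchings:
  "finite V \<Longrightarrow> card V = 2*m \<Longrightarrow> card (perfect_matchings V) = odd_dfact m"
proof (induction m arbitrary: V)
  case 0
  then show ?case by (simp add: perfect_matchings_empty odd_dfact_def)
next
  case (Suc m)
  have "V \<noteq> {}" using Suc.prems by auto
  then obtain v where v: "v \<in> V" by blast
  let ?S = "\<lambda>p. {M \<in> perfect_matchings V. {v, p} \<in> M}"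
  have card_S: "card (?S p) = odd_dfact m" if p: "p \<in> V - {v}" for p
  proof -
    have "card (?S p) = card (perfect_matchings (V - {v, p}))"
      using bij_betw_remove_chord[of v V p] v p by (auto intro: bij_betw_same_card)
    also have "\<dots> = odd_dfact m"
    proof (rule Suc.IH)
      show "card (V - {v, p}) = 2 * m"
        using Suc.prems p v by (auto simp: card_Diff_subset)
    qed (use Suc.prems in simp)
    finally show ?thesis .
  qed
  have "card (perfect_matchings V) = card (\<Union>p\<in>V - {v}. ?S p)"
    by (rule arg_cong[where f = card, OF perfect_matchings_through_vertex[OF v]])
  also have "\<dots> = (\<Sum>p\<in>V - {v}. card (?S p))"
  proof (rule card_UN_disjoint)
    show "\<forall>p\<in>V - {v}. finite (?S p)" using finite_perfect_matchings[OF Suc.prems(1)] by simp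
    show "\<forall>p\<in>V - {v}. \<forall>q\<in>V - {v}. p \<noteq> q \<longrightarrow> ?S p \<inter> ?S q = {}"
      using perfect_matching_unique[of _ V "{v, _}" "{v, _}" v] by (auto simp: doubleton_eq_iff)
    show "finite (V - {v})" using Suc.prems by simp
  qed
  also have "\<dots> = odd_dfact (Suc m)"
    using card_S Suc.prems v by (simp add: odd_dfact_Suc)
  finally show ?case .
qed

lemma card_perfect_matchings_le_1:
  assumes "finite V" "card V \<le> 2"
  shows "card (perfect_matchings V) \<le> 1"
proof -
  have "M = (if V = {} then {} else {V})" if M: "M \<in> perfect_matchings V" for M
  proof -
    have "e = V" if "e \<in> M" for e
      using perfect_matching_subset[OF M that] perfect_matching_card[OF M that] assms
      by (metis card_seteq)
    then show ?thesis
      using perfect_matching_cover[OF M] M perfect_matchings_empty by (cases "V = {}") auto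
  qed
  then show ?thesis
    using card_le_Suc0_iff_eq[OF finite_perfect_matchings[OF assms(1)]] by auto
qed

definition act :: "('a \<Rightarrow> 'b) \<Rightarrow> 'a set set \<Rightarrow> 'b set set" where
  "act g M = (\<lambda>e. g ` e) ` M"

lemma act_cong: "M \<subseteq> Pow V \<Longrightarrow> (\<And>x. x \<in> V \<Longrightarrow> g x = h x) \<Longrightarrow> act g M = act h M"
  unfolding act_def by (intro image_cong refl) (auto intro!: image_cong)

lemma act_id_on: "M \<subseteq> Pow V \<Longrightarrow> (\<And>x. x \<in> V \<Longrightarrow> g x = x) \<Longrightarrow> act g M = M"
  using act_cong[of M V g id] unfolding act_def by simp

lemma act_act: "act g (act h M) = act (\<lambda>x. g (h x)) M"
  unfolding act_def by (simp add: image_image image_comp comp_def)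

lemma act_Diff: "inj_on g V \<Longrightarrow> M \<subseteq> Pow V \<Longrightarrow> C \<subseteq> Pow V \<Longrightarrow> act g (M - C) = act g M - act g C"
  unfolding act_def by (rule inj_on_image_set_diff[OF inj_on_image_Pow]) auto

lemma act_perfect_matching:
  assumes g: "bij_betw g V V" and M: "M \<in> perfect_matchings V"
  shows "act g M \<in> perfect_matchings V"
  unfolding perfect_matchings_def
proof (intro CollectI conjI ballI)
  fix e' assume "e' \<in> act g M"
  then obtain e where e: "e \<in> M" "e' = g ` e" unfolding act_def by blast
  have "e \<subseteq> V" using perfect_matching_subset[OF M e(1)] .
  then show "e' \<subseteq> V" "card e' = 2"
    using e g perfect_matching_card[OF M e(1)]
    by (auto simp: bij_betw_def card_image inj_on_subset)
next
  fix v assume "v \<in> V"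
  then obtain u where u: "u \<in> V" "v = g u" using g by (auto simp: bij_betw_def)
  obtain e where e: "e \<in> M" "u \<in> e" using perfect_matching_cover[OF M u(1)] by blast
  show "\<exists>!e'. e' \<in> act g M \<and> v \<in> e'"
  proof (rule ex1I[of _ "g ` e"])
    show "g ` e \<in> act g M \<and> v \<in> g ` e" using e u unfolding act_def by blast
    fix e' assume e': "e' \<in> act g M \<and> v \<in> e'"
    then obtain e2 u2 where e2: "e2 \<in> M" "e' = g ` e2" "u2 \<in> e2" "v = g u2"
      unfolding act_def by blast
    then have "u2 = u"
      using g u perfect_matching_subset[OF M e2(1)] by (auto simp: bij_betw_def inj_on_def)
    then show "e' = g ` e" using perfect_matching_unique[OF M e2(1) e(1)] e e2 by blast
  qed
qed

definition invariant_matchings :: "('a \<Rightarrow> 'a) \<Rightarrow> 'a set \<Rightarrow> 'a set set set" where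
  "invariant_matchings \<sigma> V = {M \<in> perfect_matchings V. act \<sigma> M = M}"

definition chord_orbit :: "('a \<Rightarrow> 'a) \<Rightarrow> 'a set \<Rightarrow> 'a set set" where
  "chord_orbit \<sigma> c = range (\<lambda>j. (\<sigma> ^^ j) ` c)"

lemma chord_in_chord_orbit: "c \<in> chord_orbit \<sigma> c" "\<sigma> ` c \<in> chord_orbit \<sigma> c"
  unfolding chord_orbit_def
  using range_eqI[of _ "\<lambda>j. (\<sigma> ^^ j) ` c" 0] range_eqI[of _ "\<lambda>j. (\<sigma> ^^ j) ` c" 1] by auto

lemma chord_orbit_subset:
  assumes M: "M \<in> invariant_matchings \<sigma> V" and c: "c \<in> M"
  shows "chord_orbit \<sigma> c \<subseteq> M"
proof -
  have "(\<sigma> ^^ j) ` c \<in> M" for j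
  proof (induction j)
    case (Suc j)
    then have "\<sigma> ` ((\<sigma> ^^ j) ` c) \<in> act \<sigma> M" unfolding act_def by blast
    with M show ?case by (simp add: invariant_matchings_def image_comp)
  qed (simp add: c)
  then show ?thesis unfolding chord_orbit_def by blast
qed

lemma act_chord_orbit:
  assumes "finite V" "inj_on \<sigma> V" "chord_orbit \<sigma> c \<subseteq> Pow V"
  shows "act \<sigma> (chord_orbit \<sigma> c) = chord_orbit \<sigma> c"
proof -
  have "finite (chord_orbit \<sigma> c)"
    using assms(1,3) by (meson finite_Pow_iff finite_subset)
  moreover have "act \<sigma> (chord_orbit \<sigma> c) \<subseteq> chord_orbit \<sigma> c"
  proof
    fix x assume "x \<in> act \<sigma> (chord_orbit \<sigma> c)"
    then obtain j where "x = \<sigma> ` ((\<sigma> ^^ j) ` c)" unfolding act_def chord_orbit_def by blast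
    then have "x = (\<sigma> ^^ Suc j) ` c" by (simp add: image_comp)
    then show "x \<in> chord_orbit \<sigma> c" unfolding chord_orbit_def by blast
  qed
  moreover have "inj_on (image \<sigma>) (chord_orbit \<sigma> c)"
    using inj_on_subset[OF inj_on_image_Pow[OF assms(2)] assms(3)] .
  ultimately show ?thesis unfolding act_def by (rule endo_inj_surj)
qed

lemma invariant_matchings_Diff:
  assumes M: "M \<in> invariant_matchings \<sigma> V" and C: "C \<subseteq> M" "act \<sigma> C = C"
    and inj: "inj_on \<sigma> V"
  shows "M - C \<in> invariant_matchings \<sigma> (V - \<Union>C)"
proof -
  have pm: "M \<in> perfect_matchings V" and invM: "act \<sigma> M = M"
    using M by (auto simp: invariant_matchings_def)
  have "act \<sigma> (M - C) = act \<sigma> M - act \<sigma> C"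
    using C perfect_matching_Pow[OF pm] by (intro act_Diff[OF inj]) auto
  then show ?thesis
    using perfect_matching_Diff[OF pm C(1)] invM C(2) by (simp add: invariant_matchings_def)
qed

lemma bij_betw_Diff_Union:
  assumes \<sigma>: "bij_betw \<sigma> V V" and C: "C \<subseteq> Pow V" "act \<sigma> C = C"
  shows "bij_betw \<sigma> (V - \<Union>C) (V - \<Union>C)"
proof -
  have "\<sigma> ` \<Union>C = \<Union>(act \<sigma> C)" unfolding act_def by blast
  then have "bij_betw \<sigma> (\<Union>C) (\<Union>C)"
    using C by (intro bij_betw_subset[OF \<sigma>]) auto
  then show ?thesis using C by (intro bij_betw_DiffI[OF \<sigma>]) auto
qed

lemma card_invariant_matchings_containing:
  assumes "finite V" "inj_on \<sigma> V" "act \<sigma> C = C"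
  shows "card {M \<in> invariant_matchings \<sigma> V. C \<subseteq> M} \<le> card (invariant_matchings \<sigma> (V - \<Union>C))"
proof (rule card_inj_on_le[where f = "\<lambda>M. M - C"])
  show "inj_on (\<lambda>M. M - C) {M \<in> invariant_matchings \<sigma> V. C \<subseteq> M}"
    by (rule inj_onI) blast
  show "(\<lambda>M. M - C) ` {M \<in> invariant_matchings \<sigma> V. C \<subseteq> M} \<subseteq> invariant_matchings \<sigma> (V - \<Union>C)"
    using invariant_matchings_Diff assms(2,3) by blast
  show "finite (invariant_matchings \<sigma> (V - \<Union>C))"
    using assms(1) finite_perfect_matchings[of "V - \<Union>C"] by (simp add: invariant_matchings_def)
qed

lemma card_Union_chord_orbit:
  assumes V: "finite V" and M: "M \<in> invariant_matchings \<sigma> V" "c \<in> M"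
  shows "2 \<le> card (\<Union>(chord_orbit \<sigma> c))"
    and "\<sigma> ` c \<noteq> c \<Longrightarrow> 4 \<le> card (\<Union>(chord_orbit \<sigma> c))"
proof -
  let ?C = "chord_orbit \<sigma> c"
  have pm: "M \<in> perfect_matchings V" using M by (simp add: invariant_matchings_def)
  have CM: "?C \<subseteq> M" by (rule chord_orbit_subset[OF M])
  then have fin: "finite (\<Union>?C)"
    using perfect_matching_Pow[OF pm] V by (meson Sup_le_iff PowD finite_subset subset_iff)
  note c = chord_in_chord_orbit[where \<sigma> = \<sigma> and c = c]
  have card_c: "card c = 2" "card (\<sigma> ` c) = 2"
    using CM c perfect_matching_card[OF pm] by auto
  show "2 \<le> card (\<Union>?C)"
    using card_mono[OF fin, of c] c card_c by auto
  assume "\<sigma> ` c \<noteq> c"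
  then have "c \<inter> \<sigma> ` c = {}"
    using perfect_matching_unique[OF pm] CM c by blast
  then have "card (c \<union> \<sigma> ` c) = 4"
    using card_c card_Un_disjoint[of c "\<sigma> ` c"] card_ge_0_finite[of c] card_ge_0_finite[of "\<sigma> ` c"]
    by simp
  then show "4 \<le> card (\<Union>?C)"
    using card_mono[OF fin, of "c \<union> \<sigma> ` c"] c by auto
qed

text \<open>W is V minus the vertices covered by the orbit of c, which every such matching contains.\<close>
lemma invariant_matchings_through_chord:
  assumes V: "finite V" "bij_betw \<sigma> V V"
    and M0: "M0 \<in> invariant_matchings \<sigma> V" "c \<in> M0"
  obtains W where "W \<subseteq> V" "bij_betw \<sigma> W W"
    "card {M \<in> invariant_matchings \<sigma> V. c \<in> M} \<le> card (invariant_matchings \<sigma> W)"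
    "card W + 2 \<le> card V" "\<sigma> ` c \<noteq> c \<Longrightarrow> card W + 4 \<le> card V"
proof
  let ?C = "chord_orbit \<sigma> c"
  have inj: "inj_on \<sigma> V" using V(2) by (simp add: bij_betw_def)
  have pm0: "M0 \<in> perfect_matchings V" using M0(1) by (simp add: invariant_matchings_def)
  have CV: "?C \<subseteq> Pow V" using chord_orbit_subset[OF M0] perfect_matching_Pow[OF pm0] by blast
  have actC: "act \<sigma> ?C = ?C" by (rule act_chord_orbit[OF V(1) inj CV])
  have "{M \<in> invariant_matchings \<sigma> V. c \<in> M} = {M \<in> invariant_matchings \<sigma> V. ?C \<subseteq> M}"
    using chord_orbit_subset chord_in_chord_orbit(1) by blast
  then show "card {M \<in> invariant_matchings \<sigma> V. c \<in> M}
      \<le> card (invariant_matchings \<sigma> (V - \<Union>?C))"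
    using card_invariant_matchings_containing[OF V(1) inj actC] by simp
  show "bij_betw \<sigma> (V - \<Union>?C) (V - \<Union>?C)" by (rule bij_betw_Diff_Union[OF V(2) CV actC])
  have UV: "\<Union>?C \<subseteq> V" using CV by blast
  have "card (V - \<Union>?C) = card V - card (\<Union>?C)"
    using card_Diff_subset[OF finite_subset[OF UV V(1)] UV] .
  moreover have "card (\<Union>?C) \<le> card V" using card_mono[OF V(1) UV] .
  ultimately show "card (V - \<Union>?C) + 2 \<le> card V" "\<sigma> ` c \<noteq> c \<Longrightarrow> card (V - \<Union>?C) + 4 \<le> card V"
    using card_Union_chord_orbit[OF V(1) M0] by auto
qed auto

text \<open>Split according to the chord through a non-fixed vertex v: either it is the
  \<sigma>-stable chord {v, \<sigma> v}, or it lies in an orbit covering at least four vertices.\<close>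
lemma card_invariant_matchings_step:
  assumes V: "finite V" "bij_betw \<sigma> V V" and v: "v \<in> V" "\<sigma> v \<noteq> v"
    and stable: "\<And>W. W \<subseteq> V \<Longrightarrow> bij_betw \<sigma> W W \<Longrightarrow> card W + 2 \<le> card V \<Longrightarrow>
        card (invariant_matchings \<sigma> W) \<le> b1"
    and unstable: "\<And>W. W \<subseteq> V \<Longrightarrow> bij_betw \<sigma> W W \<Longrightarrow> card W + 4 \<le> card V \<Longrightarrow>
        card (invariant_matchings \<sigma> W) \<le> b2"
  shows "card (invariant_matchings \<sigma> V) \<le> b1 + (card V - 2) * b2"
proof -
  let ?S = "\<lambda>p. {M \<in> invariant_matchings \<sigma> V. {v, p} \<in> M}"
  have w: "\<sigma> v \<in> V - {v}" using V(2) v by (auto simp: bij_betw_def)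
  have bound: "card (?S p) \<le> (if p = \<sigma> v then b1 else b2)" for p
  proof (cases "?S p = {}")
    case False
    then obtain M0 where M0: "M0 \<in> invariant_matchings \<sigma> V" "{v, p} \<in> M0" by blast
    obtain W where W: "W \<subseteq> V" "bij_betw \<sigma> W W" "card (?S p) \<le> card (invariant_matchings \<sigma> W)"
      "card W + 2 \<le> card V" "\<sigma> ` {v, p} \<noteq> {v, p} \<Longrightarrow> card W + 4 \<le> card V"
      using invariant_matchings_through_chord[OF V M0] by blast
    show ?thesis
    proof (cases "p = \<sigma> v")
      case True
      then show ?thesis using W(3) stable[OF W(1,2,4)] by simp
    next
      case False
      then have "\<sigma> ` {v, p} \<noteq> {v, p}" using v by auto
      then show ?thesis using W(3) unstable[OF W(1,2) W(5)] False by simp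
    qed
  qed (metis card.empty zero_le)
  have "invariant_matchings \<sigma> V \<subseteq> (\<Union>p\<in>V - {v}. ?S p)"
    using perfect_matchings_through_vertex[OF v(1)] by (auto simp: invariant_matchings_def)
  moreover have "finite (invariant_matchings \<sigma> V)"
    using finite_perfect_matchings[OF V(1)] by (simp add: invariant_matchings_def)
  ultimately have "card (invariant_matchings \<sigma> V) \<le> card (\<Union>p\<in>V - {v}. ?S p)"
    by (intro card_mono) (auto intro: finite_subset[of _ "invariant_matchings \<sigma> V"])
  also have "\<dots> \<le> (\<Sum>p\<in>V - {v}. card (?S p))"
    by (rule card_UN_le) (use V(1) in simp)
  also have "\<dots> \<le> (\<Sum>p\<in>V - {v}. if p = \<sigma> v then b1 else b2)"
    by (rule sum_mono) (rule bound)
  also have "\<dots> = b1 + (card V - 2) * b2"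
    using w v V(1) by (simp add: sum.remove card_Diff_subset numeral_2_eq_2)
  finally show ?thesis .
qed

fun invariant_bound :: "nat \<Rightarrow> nat" where
  "invariant_bound 0 = 1"
| "invariant_bound (Suc 0) = 1"
| "invariant_bound (Suc (Suc k)) = invariant_bound (Suc k) + (2*k + 4) * invariant_bound k"

lemma invariant_bound_pos: "invariant_bound m \<ge> 1"
  by (induction m rule: invariant_bound.induct) auto

lemma card_invariant_matchings_le_1:
  "finite V \<Longrightarrow> card V \<le> 2 \<Longrightarrow> card (invariant_matchings \<sigma> V) \<le> 1"
  using card_perfect_matchings_le_1 finite_perfect_matchings
  by (metis (no_types, lifting) card_mono invariant_matchings_def le_trans mem_Collect_eq subsetI)

lemma card_invariant_matchings_le:
  assumes "finite V" "bij_betw \<sigma> V V" "card {x\<in>V. \<sigma> x = x} \<le> 2" "card V \<le> 2*m"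
  shows "card (invariant_matchings \<sigma> V) \<le> invariant_bound m"
  using assms
proof (induction m arbitrary: V rule: invariant_bound.induct)
  case (1 V)
  then show ?case using card_invariant_matchings_le_1[of V \<sigma>] by simp
next
  case (2 V)
  then show ?case using card_invariant_matchings_le_1[of V \<sigma>] by simp
next
  case (3 k V)
  note V = "3.prems"(1,2) and fixed = "3.prems"(3) and card_V = "3.prems"(4)
  show ?case
  proof (cases "card V \<le> 2")
    case True
    then show ?thesis
      using card_invariant_matchings_le_1[OF V(1)] invariant_bound_pos le_trans by blast
  next
    case False
    then have "{x\<in>V. \<sigma> x = x} \<noteq> V" using fixed by auto
    then obtain v where v: "v \<in> V" "\<sigma> v \<noteq> v" by blast
    have sub: "finite W \<and> card {x\<in>W. \<sigma> x = x} \<le> 2" if "W \<subseteq> V" for W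
    proof
      show "finite W" using V(1) that by (rule rev_finite_subset)
      have "card {x\<in>W. \<sigma> x = x} \<le> card {x\<in>V. \<sigma> x = x}"
        using V(1) that by (intro card_mono) auto
      then show "card {x\<in>W. \<sigma> x = x} \<le> 2" using fixed by linarith
    qed
    have "card (invariant_matchings \<sigma> V)
        \<le> invariant_bound (Suc k) + (card V - 2) * invariant_bound k"
      by (rule card_invariant_matchings_step[OF V v])
        (use sub card_V "3.IH" in \<open>auto simp: mult_2_right\<close>)
    also have "\<dots> \<le> invariant_bound (Suc k) + (2*k + 4) * invariant_bound k"
      using card_V by (intro add_left_mono mult_right_mono) simp_all
    finally show ?thesis by simp
  qed
qed

text \<open>Vertex i of the 2n-gon is identified with the residue i - 1 modulo 2n; the dihedral
  group then acts by the affine maps x \<mapsto> s x + k with s = \<plusminus>1.\<close>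
definition dihedral_map :: "nat \<Rightarrow> int \<Rightarrow> int \<Rightarrow> nat \<Rightarrow> nat" where
  "dihedral_map n s k i = nat ((s * (int i - 1) + k) mod (2 * int n)) + 1"

lemma int_dihedral_map:
  "n \<ge> 1 \<Longrightarrow> int (dihedral_map n s k i) = (s * (int i - 1) + k) mod (2 * int n) + 1"
  unfolding dihedral_map_def by simp

lemma dihedral_map_in:
  assumes "n \<ge> 1"
  shows "dihedral_map n s k i \<in> {1..2*n}"
proof -
  have "0 \<le> (s * (int i - 1) + k) mod (2 * int n)" "(s * (int i - 1) + k) mod (2 * int n) < 2 * int n"
    using assms by simp_all
  then have "1 \<le> int (dihedral_map n s k i) \<and> int (dihedral_map n s k i) \<le> int (2 * n)"
    using int_dihedral_map[OF assms, of s k i] by simp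
  then show ?thesis by simp
qed

lemma vertex_residue: "i \<in> {1..2*n} \<Longrightarrow> (int i - 1) mod (2 * int n) = int i - 1"
  by auto

lemma dihedral_map_1_0: "i \<in> {1..2*n} \<Longrightarrow> dihedral_map n 1 0 i = i"
  unfolding dihedral_map_def using vertex_residue[of i n] by auto

lemma dihedral_map_mod: "dihedral_map n s (k mod (2 * int n)) = dihedral_map n s k"
  unfolding dihedral_map_def by (simp add: mod_simps)

lemma dihedral_map_dihedral_map:
  assumes "n \<ge> 1"
  shows "dihedral_map n s k (dihedral_map n t l i) = dihedral_map n (s * t) (s * l + k) i"
proof -
  let ?N = "2 * int n" and ?x = "int i - 1"
  have "(s * ((t * ?x + l) mod ?N) + k) mod ?N = (s * (t * ?x + l) + k) mod ?N"
    by (metis mod_add_left_eq mod_mult_right_eq)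
  also have "\<dots> = (s * t * ?x + (s * l + k)) mod ?N"
    by (simp add: algebra_simps)
  finally show ?thesis
    using int_dihedral_map[OF assms, of t l i] by (simp add: dihedral_map_def)
qed

lemma rot_eq_dihedral_map:
  assumes "i \<ge> 1"
  shows "rot n k i = dihedral_map n 1 (int k) i"
proof -
  have "int (i - 1 + k) = int i - 1 + int k" using assms by simp
  then have "(int i - 1 + int k) mod (2 * int n) = int ((i - 1 + k) mod (2 * n))"
    by (simp add: zmod_int algebra_simps)
  then show ?thesis by (simp add: rot_def dihedral_map_def)
qed

lemma refl_eq_dihedral_map:
  assumes i: "i \<in> {1..2*n}"
  shows "refl n k i = dihedral_map n (-1) (int k) i"
proof -
  have "int (refl n k i) = (2 * int n + (int k - (int i - 1))) mod (2 * int n) + 1"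
    using i unfolding refl_def by (simp add: zmod_int of_nat_diff algebra_simps)
  also have "\<dots> = (int k - (int i - 1)) mod (2 * int n) + 1"
    by (simp only: mod_add_self1)
  also have "\<dots> = (-1 * (int i - 1) + int k) mod (2 * int n) + 1"
    by (simp add: algebra_simps)
  also have "\<dots> = int (dihedral_map n (-1) (int k) i)"
    using i by (simp add: int_dihedral_map)
  finally show ?thesis by simp
qed

lemma dihedral_map_eq_iff:
  "n \<ge> 1 \<Longrightarrow> dihedral_map n s k i = i \<longleftrightarrow> (s * (int i - 1) + k) mod (2 * int n) = int i - 1"
  using int_dihedral_map[of n s k i] by linarith

lemma dihedral_map_eq_id:
  assumes n: "n \<ge> 2" and s: "s \<in> {1, -1}" and id: "\<forall>i\<in>{1..2*n}. dihedral_map n s k i = i"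
  shows "s = 1" and "k mod (2 * int n) = 0"
proof -
  have "(s * (int i - 1) + k) mod (2 * int n) = int i - 1" if "i \<in> {1, 2}" for i
    using id that n dihedral_map_eq_iff[of n s k i] by auto
  from this[of 1] this[of 2] have k: "k mod (2 * int n) = 0" and "(s + k) mod (2 * int n) = 1"
    by simp_all
  then have "s mod (2 * int n) = 1" by (simp add: mod_add_right_eq[symmetric])
  then show "s = 1" using s n by (auto simp: zmod_minus1)
  show "k mod (2 * int n) = 0" by (rule k)
qed

lemma reflection_fixed_residues:
  fixes n k x y :: int
  assumes "(k - x) mod (2 * n) = x" "(k - y) mod (2 * n) = y"
    and "0 \<le> x" "x < 2 * n" "0 \<le> y" "y < 2 * n"
  shows "y = x \<or> y = x + n \<or> y = x - n"
proof -
  have "(k - x) mod (2 * n) = x mod (2 * n)" "(k - y) mod (2 * n) = y mod (2 * n)"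
    using assms by simp_all
  then have "2 * n dvd (k - x) - x" "2 * n dvd (k - y) - y"
    by (simp_all only: mod_eq_dvd_iff)
  then have "2 * n dvd ((k - x) - x) - ((k - y) - y)" by (rule dvd_diff)
  moreover have "((k - x) - x) - ((k - y) - y) = 2 * (y - x)" by simp
  ultimately have "2 * n dvd 2 * (y - x)" by simp
  then obtain t where t: "y - x = n * t"
    by (metis dvd_def dvd_mult_cancel_left zero_neq_numeral)
  have n: "n > 0" using assms by linarith
  have "n * t < n * 2" "n * (-2) < n * t" using t assms(3-6) by linarith+
  then have "t < 2" "-2 < t" using mult_less_cancel_left_pos[OF n] by blast+
  then have "t \<in> {-1, 0, 1}" by auto
  with t show ?thesis by auto
qed

lemma rotation_fixed_point_imp_id:
  assumes i: "i \<in> {1..2*n}" and fixed: "dihedral_map n 1 k i = i"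
  shows "\<forall>j\<in>{1..2*n}. dihedral_map n 1 k j = j"
proof -
  have n: "n \<ge> 1" using i by simp
  have "(int i - 1 + k) mod (2 * int n) = (int i - 1) mod (2 * int n)"
    using fixed i dihedral_map_eq_iff[OF n] by (simp add: vertex_residue)
  then have "2 * int n dvd (int i - 1 + k) - (int i - 1)" by (simp only: mod_eq_dvd_iff)
  then have "k mod (2 * int n) = 0" by simp
  then have "dihedral_map n 1 k = dihedral_map n 1 0" using dihedral_map_mod[of n 1 k] by simp
  then show ?thesis using dihedral_map_1_0 by simp
qed

lemma card_fixed_points_reflection: "card {i\<in>{1..2*n}. dihedral_map n (-1) k i = i} \<le> 2"
proof (cases "{i\<in>{1..2*n}. dihedral_map n (-1) k i = i} = {}")
  case False
  let ?F = "{i\<in>{1..2*n}. dihedral_map n (-1) k i = i}"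
  obtain i0 where i0: "i0 \<in> ?F" using False by blast
  then have n: "n \<ge> 1" by simp
  have "?F \<subseteq> {i0, if i0 \<le> n then i0 + n else i0 - n}"
  proof
    fix j assume j: "j \<in> ?F"
    then have "int j = int i0 \<or> int j = int i0 + int n \<or> int j = int i0 - int n"
      using reflection_fixed_residues[of "k" "int i0 - 1" "int n" "int j - 1"] i0
        dihedral_map_eq_iff[OF n]
      by (auto simp: algebra_simps)
    then show "j \<in> {i0, if i0 \<le> n then i0 + n else i0 - n}" using j i0 by auto
  qed
  then have "card ?F \<le> card {i0, if i0 \<le> n then i0 + n else i0 - n}"
    by (rule card_mono[rotated]) simp
  also have "\<dots> \<le> 2" by (simp add: card_insert_if)
  finally show ?thesis .
qed (metis card.empty zero_le)

lemma dihedral_obtain_dihedral_map: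
  assumes "g \<in> dihedral n"
  obtains s k where "s \<in> {1, -1}" "\<forall>i\<in>{1..2*n}. g i = dihedral_map n s k i"
proof -
  from assms obtain k where "g = rot n k \<or> g = refl n k" unfolding dihedral_def by blast
  then show thesis
    using that[of 1 "int k"] that[of "-1" "int k"] rot_eq_dihedral_map refl_eq_dihedral_map
    by auto
qed

lemma dihedral_map_obtain_dihedral:
  assumes "n \<ge> 1" "s \<in> {1, -1}"
  obtains g where "g \<in> dihedral n" "\<forall>i\<in>{1..2*n}. g i = dihedral_map n s k i"
proof -
  define r where "r = nat (k mod (2 * int n))"
  have r: "r < 2 * n" "int r = k mod (2 * int n)"
    using assms(1) unfolding r_def by (simp_all add: nat_less_iff)
  then have "rot n r \<in> dihedral n" "refl n r \<in> dihedral n" unfolding dihedral_def by auto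
  moreover have "\<forall>i\<in>{1..2*n}. rot n r i = dihedral_map n 1 k i"
    using r(2) rot_eq_dihedral_map dihedral_map_mod by simp
  moreover have "\<forall>i\<in>{1..2*n}. refl n r i = dihedral_map n (-1) k i"
    using r(2) refl_eq_dihedral_map dihedral_map_mod by simp
  ultimately show thesis using that assms(2) by auto
qed

lemma dihedral_map_inverse:
  "n \<ge> 1 \<Longrightarrow> s \<in> {1, -1} \<Longrightarrow> i \<in> {1..2*n} \<Longrightarrow>
    dihedral_map n s (- (s * k)) (dihedral_map n s k i) = i"
  by (auto simp: dihedral_map_dihedral_map dihedral_map_1_0)

lemma bij_betw_dihedral:
  assumes n: "n \<ge> 1" and g: "g \<in> dihedral n"
  shows "bij_betw g {1..2*n} {1..2*n}"
proof -
  obtain s k where s: "s \<in> {1, -1}" and g_eq: "\<forall>i\<in>{1..2*n}. g i = dihedral_map n s k i"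
    using dihedral_obtain_dihedral_map[OF g] .
  have into: "g ` {1..2*n} \<subseteq> {1..2*n}" using g_eq dihedral_map_in[OF n] by auto
  have "inj_on g {1..2*n}"
    by (rule inj_on_inverseI[where g = "dihedral_map n s (- (s * k))"])
      (use g_eq dihedral_map_inverse[OF n s] in simp)
  with into show ?thesis by (simp add: bij_betw_def endo_inj_surj)
qed

lemma dihedral_comp:
  assumes n: "n \<ge> 1" and g: "g \<in> dihedral n" and h: "h \<in> dihedral n"
  obtains f where "f \<in> dihedral n" "\<forall>i\<in>{1..2*n}. g (h i) = f i"
proof -
  obtain s k where s: "s \<in> {1, -1}" and g_eq: "\<forall>i\<in>{1..2*n}. g i = dihedral_map n s k i"
    using dihedral_obtain_dihedral_map[OF g] .
  obtain t l where t: "t \<in> {1, -1}" and h_eq: "\<forall>i\<in>{1..2*n}. h i = dihedral_map n t l i"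
    using dihedral_obtain_dihedral_map[OF h] .
  have "\<forall>i\<in>{1..2*n}. g (h i) = dihedral_map n (s * t) (s * l + k) i"
    using g_eq h_eq dihedral_map_in[OF n] by (simp add: dihedral_map_dihedral_map[OF n])
  moreover have "s * t \<in> {1, -1}" using s t by auto
  ultimately show thesis using dihedral_map_obtain_dihedral[OF n] that by metis
qed

lemma dihedral_inverse:
  assumes n: "n \<ge> 1" and g: "g \<in> dihedral n"
  obtains h where "h \<in> dihedral n" "\<forall>i\<in>{1..2*n}. h (g i) = i"
proof -
  obtain s k where s: "s \<in> {1, -1}" and g_eq: "\<forall>i\<in>{1..2*n}. g i = dihedral_map n s k i"
    using dihedral_obtain_dihedral_map[OF g] .
  obtain h where "h \<in> dihedral n" "\<forall>i\<in>{1..2*n}. h i = dihedral_map n s (- (s * k)) i"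
    using dihedral_map_obtain_dihedral[OF n s] .
  then show thesis
    using that g_eq dihedral_map_in[OF n] dihedral_map_inverse[OF n s] by simp
qed

lemma dihedral_identity:
  assumes "n \<ge> 1"
  obtains g where "g \<in> dihedral n" "\<forall>i\<in>{1..2*n}. g i = i"
  using dihedral_map_obtain_dihedral[OF assms, of 1 0] dihedral_map_1_0 by auto

lemma card_fixed_points_dihedral:
  assumes "g \<in> dihedral n" "\<exists>i\<in>{1..2*n}. g i \<noteq> i"
  shows "card {i\<in>{1..2*n}. g i = i} \<le> 2"
proof -
  obtain s k where s: "s \<in> {1, -1}" and g: "\<forall>i\<in>{1..2*n}. g i = dihedral_map n s k i"
    using dihedral_obtain_dihedral_map[OF assms(1)] .
  then have F: "{i\<in>{1..2*n}. g i = i} = {i\<in>{1..2*n}. dihedral_map n s k i = i}" by auto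
  show ?thesis
  proof (cases "s = 1")
    case True
    then have "{i\<in>{1..2*n}. g i = i} = {}"
      using rotation_fixed_point_imp_id assms(2) g by auto
    then show ?thesis by (metis card.empty zero_le)
  next
    case False
    with s F show ?thesis using card_fixed_points_reflection by simp
  qed
qed

lemma card_dihedral_le: "card (dihedral n) \<le> 4 * n"
proof -
  have "dihedral n = rot n ` {..<2*n} \<union> refl n ` {..<2*n}"
    unfolding dihedral_def by auto
  then have "card (dihedral n) \<le> card (rot n ` {..<2*n}) + card (refl n ` {..<2*n})"
    by (simp add: card_Un_le)
  also have "\<dots> \<le> 2 * n + 2 * n"
    by (intro add_mono) (auto intro: card_image_le[THEN order_trans])
  finally show ?thesis by simp
qed

lemma finite_dihedral: "finite (dihedral n)"
proof -
  have "dihedral n = rot n ` {..<2*n} \<union> refl n ` {..<2*n}"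
    unfolding dihedral_def by auto
  then show ?thesis by simp
qed

lemma act_dihedral_chord_sets:
  "n \<ge> 1 \<Longrightarrow> g \<in> dihedral n \<Longrightarrow> M \<in> chord_sets n \<Longrightarrow> act g M \<in> chord_sets n"
  unfolding chord_sets_eq_perfect_matchings by (rule act_perfect_matching[OF bij_betw_dihedral])

lemma act_cong_chord_sets:
  "M \<in> chord_sets n \<Longrightarrow> \<forall>i\<in>{1..2*n}. g i = h i \<Longrightarrow> act g M = act h M"
  by (rule act_cong[of M "{1..2*n}"]) (auto simp: chord_sets_eq_perfect_matchings perfect_matching_Pow)

lemma act_id_chord_sets: "M \<in> chord_sets n \<Longrightarrow> \<forall>i\<in>{1..2*n}. g i = i \<Longrightarrow> act g M = M"
  by (rule act_id_on[of M "{1..2*n}"]) (auto simp: chord_sets_eq_perfect_matchings perfect_matching_Pow)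

lemma diagram_equiv_iff:
  "(M, M') \<in> diagram_equiv n \<longleftrightarrow>
     M \<in> chord_sets n \<and> M' \<in> chord_sets n \<and> (\<exists>g\<in>dihedral n. act g M = M')"
  unfolding diagram_equiv_def act_def by blast

lemma equiv_diagram_equiv:
  assumes n: "n \<ge> 1"
  shows "equiv (chord_sets n) (diagram_equiv n)"
proof (rule equivI)
  show "diagram_equiv n \<subseteq> chord_sets n \<times> chord_sets n"
    unfolding diagram_equiv_def by auto
  show "refl_on (chord_sets n) (diagram_equiv n)"
  proof (rule refl_onI)
    fix M assume M: "M \<in> chord_sets n"
    obtain g where g: "g \<in> dihedral n" "\<forall>i\<in>{1..2*n}. g i = i" using dihedral_identity[OF n] .
    then have "act g M = M" using act_id_chord_sets[OF M] by simp
    with M g show "(M, M) \<in> diagram_equiv n" by (auto simp: diagram_equiv_iff)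
  qed
  show "sym (diagram_equiv n)"
  proof (rule symI)
    fix M M' assume "(M, M') \<in> diagram_equiv n"
    then obtain g where M: "M \<in> chord_sets n" "M' \<in> chord_sets n"
      and g: "g \<in> dihedral n" "act g M = M'" by (auto simp: diagram_equiv_iff)
    obtain h where h: "h \<in> dihedral n" "\<forall>i\<in>{1..2*n}. h (g i) = i"
      using dihedral_inverse[OF n g(1)] .
    have "act h M' = act (\<lambda>i. h (g i)) M" unfolding g(2)[symmetric] by (rule act_act)
    also have "\<dots> = M" using act_id_chord_sets[OF M(1)] h(2) by simp
    finally show "(M', M) \<in> diagram_equiv n"
      using M h(1) by (auto simp: diagram_equiv_iff)
  qed
  show "trans (diagram_equiv n)"
  proof (rule transI)
    fix M1 M2 M3 assume "(M1, M2) \<in> diagram_equiv n" "(M2, M3) \<in> diagram_equiv n"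
    then obtain g1 g2 where M: "M1 \<in> chord_sets n" "M3 \<in> chord_sets n"
      and g: "g1 \<in> dihedral n" "act g1 M1 = M2" "g2 \<in> dihedral n" "act g2 M2 = M3"
      by (auto simp: diagram_equiv_iff)
    obtain f where f: "f \<in> dihedral n" "\<forall>i\<in>{1..2*n}. g2 (g1 i) = f i"
      using dihedral_comp[OF n g(3) g(1)] .
    have "M3 = act (\<lambda>i. g2 (g1 i)) M1" unfolding g(4)[symmetric] g(2)[symmetric] by (rule act_act)
    also have "\<dots> = act f M1" using act_cong_chord_sets[OF M(1) f(2)] .
    finally show "(M1, M3) \<in> diagram_equiv n"
      using M f(1) by (auto simp: diagram_equiv_iff)
  qed
qed

lemma diagram_equiv_class:
  "n \<ge> 1 \<Longrightarrow> M \<in> chord_sets n \<Longrightarrow> diagram_equiv n `` {M} = (\<lambda>g. act g M) ` dihedral n"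
  using act_dihedral_chord_sets by (auto simp: diagram_equiv_iff)

lemma card_le_mult_card_quotient:
  assumes "finite A" "equiv A r" "\<And>x. x \<in> A \<Longrightarrow> card (r `` {x}) \<le> k"
  shows "card A \<le> k * card (A // r)"
proof -
  have "card A = card (\<Union>(A // r))" using Union_quotient[OF assms(2)] by simp
  also have "\<dots> \<le> (\<Sum>X\<in>A // r. card X)" by (rule card_Union_le_sum_card)
  also have "\<dots> \<le> (\<Sum>X\<in>A // r. k)" by (rule sum_mono) (auto elim!: quotientE intro: assms(3))
  finally show ?thesis by (simp add: mult.commute)
qed

lemma card_classes_meeting_le:
  assumes "equiv A r" "B \<subseteq> A" "finite B"
  shows "card {X \<in> A // r. X \<inter> B \<noteq> {}} \<le> card B"
proof -
  have "{X \<in> A // r. X \<inter> B \<noteq> {}} \<subseteq> (\<lambda>b. r `` {b}) ` B"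
  proof
    fix X assume "X \<in> {X \<in> A // r. X \<inter> B \<noteq> {}}"
    then obtain b x where "b \<in> X \<inter> B" "X = r `` {x}" "x \<in> A" by (auto elim!: quotientE)
    then show "X \<in> (\<lambda>b. r `` {b}) ` B" using equiv_class_eq[OF assms(1)] by blast
  qed
  then show ?thesis
    using assms(3) by (meson card_image_le card_mono finite_imageI le_trans)
qed

lemma mult_card_large_classes_le:
  assumes "finite A" "equiv A r" "Q \<subseteq> A // r" "\<And>X. X \<in> Q \<Longrightarrow> k \<le> card X"
  shows "k * card Q \<le> card A"
proof -
  have "k * card Q = (\<Sum>X\<in>Q. k)" by simp
  also have "\<dots> \<le> (\<Sum>X\<in>Q. card X)" by (rule sum_mono) (rule assms(4))
  also have "\<dots> = card (\<Union>Q)"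
  proof (rule card_Union_disjoint[symmetric])
    show "pairwise disjnt Q"
      using quotient_disj[OF assms(2)] assms(3) unfolding pairwise_def disjnt_def by blast
    show "finite X" if "X \<in> Q" for X
    proof (rule finite_subset[OF _ assms(1)])
      show "X \<subseteq> A" using that assms(3) Union_quotient[OF assms(2)] by blast
    qed
  qed
  also have "\<dots> \<le> card A"
    using assms Union_quotient[OF assms(2)] by (intro card_mono) auto
  finally show ?thesis .
qed

lemma mult_card_quotient_le:
  assumes A: "finite A" "equiv A r" and B: "B \<subseteq> A"
    and large: "\<And>x. x \<in> A - B \<Longrightarrow> k \<le> card (r `` {x})"
  shows "k * card (A // r) \<le> k * card B + card A"
proof -
  let ?Q = "{X \<in> A // r. X \<inter> B = {}}"
  have large_classes: "k * card ?Q \<le> card A"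
  proof (rule mult_card_large_classes_le[OF A])
    fix X assume "X \<in> ?Q"
    then obtain x where "X = r `` {x}" "x \<in> A" "X \<inter> B = {}" by (auto elim!: quotientE)
    then show "k \<le> card X" using large equiv_class_self[OF A(2)] by blast
  qed auto
  have "card (A // r) = card ({X \<in> A // r. X \<inter> B \<noteq> {}} \<union> ?Q)"
    by (rule arg_cong[where f = card]) blast
  also have "\<dots> \<le> card {X \<in> A // r. X \<inter> B \<noteq> {}} + card ?Q" by (rule card_Un_le)
  also have "\<dots> \<le> card B + card ?Q"
    using card_classes_meeting_le[OF A(2) B finite_subset[OF B A(1)]] by (rule add_right_mono)
  finally have "k * card (A // r) \<le> k * card B + k * card ?Q"
    by (metis add_mult_distrib2 mult_le_mono2)
  with large_classes show ?thesis by linarith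
qed

definition symmetric_diagrams :: "nat \<Rightarrow> nat set set set" where
  "symmetric_diagrams n =
     {M \<in> chord_sets n. \<exists>g\<in>dihedral n. (\<exists>i\<in>{1..2*n}. g i \<noteq> i) \<and> act g M = M}"

lemma card_symmetric_diagrams:
  assumes n: "n \<ge> 1"
  shows "card (symmetric_diagrams n) \<le> 4 * n * invariant_bound n"
proof -
  let ?G = "{g \<in> dihedral n. \<exists>i\<in>{1..2*n}. g i \<noteq> i}"
  have finG: "finite ?G" using finite_dihedral by simp
  have "symmetric_diagrams n \<subseteq> (\<Union>g\<in>?G. invariant_matchings g {1..2*n})"
    by (auto simp: symmetric_diagrams_def invariant_matchings_def chord_sets_eq_perfect_matchings)
  then have "card (symmetric_diagrams n) \<le> card (\<Union>g\<in>?G. invariant_matchings g {1..2*n})"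
    using finG by (intro card_mono)
      (auto simp: invariant_matchings_def intro: finite_subset[OF _ finite_perfect_matchings])
  also have "\<dots> \<le> (\<Sum>g\<in>?G. card (invariant_matchings g {1..2*n}))"
    using finG by (rule card_UN_le)
  also have "\<dots> \<le> (\<Sum>g\<in>?G. invariant_bound n)"
  proof (rule sum_mono)
    fix g assume "g \<in> ?G"
    then have "bij_betw g {1..2*n} {1..2*n}" "card {i\<in>{1..2*n}. g i = i} \<le> 2"
      using bij_betw_dihedral[OF n] card_fixed_points_dihedral by auto
    then show "card (invariant_matchings g {1..2*n}) \<le> invariant_bound n"
      by (intro card_invariant_matchings_le) simp_all
  qed
  also have "\<dots> \<le> card (dihedral n) * invariant_bound n"
    using card_mono[OF finite_dihedral, of ?G] by simp
  also have "\<dots> \<le> 4 * n * invariant_bound n"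
    using card_dihedral_le by simp
  finally show ?thesis .
qed

text \<open>Composing with the inverse of one of the two maps reduces injectivity to the
  triviality of the stabiliser of an asymmetric diagram.\<close>
lemma inj_on_act_dihedral_map:
  assumes n: "n \<ge> 2" and M: "M \<in> chord_sets n - symmetric_diagrams n"
  shows "inj_on (\<lambda>(s, k). act (dihedral_map n s k) M) ({1, -1} \<times> {0..<2 * int n})"
proof (rule inj_onI, clarify)
  fix s k t l
  assume s: "s \<in> {1, -1}" "k \<in> {0..<2 * int n}" and t: "t \<in> {1, -1}" "l \<in> {0..<2 * int n}"
    and eq: "act (dihedral_map n s k) M = act (dihedral_map n t l) M"
  have n1: "n \<ge> 1" using n by simp
  let ?h = "dihedral_map n t (- (t * l))"
  have "act (dihedral_map n (t * s) (t * k - t * l)) M = act ?h (act (dihedral_map n s k) M)"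
    by (simp add: act_act dihedral_map_dihedral_map[OF n1])
  also have "\<dots> = act ?h (act (dihedral_map n t l) M)" by (simp only: eq)
  also have "\<dots> = act (dihedral_map n 1 0) M"
    using t by (auto simp: act_act dihedral_map_dihedral_map[OF n1])
  also have "\<dots> = M"
    using M act_id_chord_sets[of M n] dihedral_map_1_0 by simp
  finally have stable: "act (dihedral_map n (t * s) (t * k - t * l)) M = M" .
  have ts: "t * s \<in> {1, -1}" using s t by auto
  obtain g where g: "g \<in> dihedral n" "\<forall>i\<in>{1..2*n}. g i = dihedral_map n (t * s) (t * k - t * l) i"
    using dihedral_map_obtain_dihedral[OF n1 ts] .
  then have "act g M = M" using stable act_cong_chord_sets M by (metis DiffD1)
  with M g have "\<forall>i\<in>{1..2*n}. dihedral_map n (t * s) (t * k - t * l) i = i"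
    by (auto simp: symmetric_diagrams_def)
  from dihedral_map_eq_id[OF n ts this]
  have "t * s = 1" "2 * int n dvd t * (k - l)" by (simp_all add: algebra_simps mod_0_imp_dvd)
  then have "s = t" "2 * int n dvd k - l" using s(1) t(1) by (auto simp: dvd_diff_commute)
  then have "k mod (2 * int n) = l mod (2 * int n)" by (simp add: mod_eq_dvd_iff)
  with s(2) t(2) have "k = l" by simp
  with \<open>s = t\<close> show "s = t \<and> k = l" by simp
qed

lemma card_diagram_class_asymmetric:
  assumes n: "n \<ge> 2" and M: "M \<in> chord_sets n - symmetric_diagrams n"
  shows "4 * n \<le> card (diagram_equiv n `` {M})"
proof -
  have n1: "n \<ge> 1" using n by simp
  let ?P = "{1, -1} \<times> {0..<2 * int n}"
  let ?\<phi> = "\<lambda>(s, k). act (dihedral_map n s k) M"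
  have orbit: "diagram_equiv n `` {M} = (\<lambda>g. act g M) ` dihedral n"
    using diagram_equiv_class[OF n1] M by simp
  have "?\<phi> ` ?P \<subseteq> diagram_equiv n `` {M}"
  proof
    fix X assume "X \<in> ?\<phi> ` ?P"
    then obtain s k where s: "s \<in> {1, -1}" and X: "X = act (dihedral_map n s k) M" by auto
    obtain g where "g \<in> dihedral n" "\<forall>i\<in>{1..2*n}. g i = dihedral_map n s k i"
      using dihedral_map_obtain_dihedral[OF n1 s] .
    then show "X \<in> diagram_equiv n `` {M}"
      unfolding orbit X using act_cong_chord_sets M by blast
  qed
  moreover have "card (?\<phi> ` ?P) = 4 * n"
    using inj_on_act_dihedral_map[OF n M] by (simp add: card_image card_cartesian_product)
  moreover have "finite (diagram_equiv n `` {M})"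
    using orbit finite_dihedral by simp
  ultimately show ?thesis by (metis card_mono)
qed

lemma finite_chord_sets: "finite (chord_sets n)"
  unfolding chord_sets_eq_perfect_matchings by (rule finite_perfect_matchings) simp

lemma card_chord_sets: "card (chord_sets n) = odd_dfact n"
  unfolding chord_sets_eq_perfect_matchings by (rule card_perfect_matchings) simp_all

lemma odd_dfact_le_mult_d_num:
  assumes n: "n \<ge> 1"
  shows "odd_dfact n \<le> 4 * n * d_num n"
proof -
  have "card (diagram_equiv n `` {M}) \<le> 4 * n" if "M \<in> chord_sets n" for M
    using diagram_equiv_class[OF n that] card_image_le[OF finite_dihedral] card_dihedral_le
    by (metis le_trans)
  then show ?thesis
    using card_le_mult_card_quotient[OF finite_chord_sets equiv_diagram_equiv[OF n]]
    by (simp add: card_chord_sets d_num_def)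
qed

lemma mult_d_num_le:
  assumes n: "n \<ge> 2"
  shows "4 * n * d_num n \<le> 4 * n * (4 * n * invariant_bound n) + odd_dfact n"
proof -
  have "symmetric_diagrams n \<subseteq> chord_sets n" by (auto simp: symmetric_diagrams_def)
  from mult_card_quotient_le[OF finite_chord_sets equiv_diagram_equiv this
      card_diagram_class_asymmetric[OF n]] n
  have "4 * n * d_num n \<le> 4 * n * card (symmetric_diagrams n) + odd_dfact n"
    by (simp add: card_chord_sets d_num_def)
  also have "\<dots> \<le> 4 * n * (4 * n * invariant_bound n) + odd_dfact n"
    using card_symmetric_diagrams[of n] n by simp
  finally show ?thesis .
qed

lemma invariant_bound_Suc_Suc_le: "invariant_bound (Suc (Suc m)) \<le> (4*m + 7) * invariant_bound m"
proof -
  have mono: "invariant_bound k \<le> invariant_bound (Suc k)" for k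
    by (cases k) auto
  have "invariant_bound (Suc m) \<le> (2*m + 3) * invariant_bound m"
  proof (cases m)
    case (Suc j)
    have "invariant_bound (Suc m) = invariant_bound (Suc j) + (2*j + 4) * invariant_bound j"
      using Suc by simp
    also have "\<dots> \<le> invariant_bound (Suc j) + (2*j + 4) * invariant_bound (Suc j)"
      using mono[of j] by simp
    also have "\<dots> = (2*m + 3) * invariant_bound m"
      using Suc by (simp add: algebra_simps)
    finally show ?thesis .
  qed simp
  then show ?thesis by (simp add: algebra_simps)
qed

context
  fixes f :: "nat \<Rightarrow> real"
  assumes nonneg: "\<And>m. 0 \<le> f m" and step: "\<And>m. f (Suc (Suc m)) * real m \<le> f m"
begin

lemma two_step_decay_bounded: "m \<ge> 1 \<Longrightarrow> f m \<le> max (f 1) (f 2)"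
proof (induction m rule: less_induct)
  case (less m)
  show ?case
  proof (cases "m \<le> 2")
    case True
    with less.prems have "m = 1 \<or> m = 2" by auto
    then show ?thesis by auto
  next
    case False
    define j where "j = m - 2"
    then have m: "m = Suc (Suc j)" and j: "j \<ge> 1" using False by auto
    have "f m \<le> f m * real j" using nonneg[of m] j by (simp add: mult_le_cancel_left1)
    also have "\<dots> \<le> f j" using step[of j] m by simp
    also have "\<dots> \<le> max (f 1) (f 2)" using less.IH[of j] m j by simp
    finally show ?thesis .
  qed
qed

lemma two_step_decay_cubic: "f (j + 6) * (real (j + 4) * real (j + 2) * real j) \<le> f j"
proof -
  have "f (j + 6) * (real (j + 4) * real (j + 2) * real j)
      = ((f (j + 6) * real (j + 4)) * real (j + 2)) * real j"
    by (simp add: mult_ac)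
  also have "\<dots> \<le> (f (j + 4) * real (j + 2)) * real j"
    using step[of "j + 4"] by (intro mult_right_mono) (simp_all add: numeral_eq_Suc)
  also have "\<dots> \<le> f (j + 2) * real j"
    using step[of "j + 2"] by (intro mult_right_mono) (simp_all add: numeral_eq_Suc)
  also have "\<dots> \<le> f j" using step[of j] by (simp add: numeral_eq_Suc)
  finally show ?thesis .
qed

lemma tendsto_square_mult_two_step_decay: "(\<lambda>n. real n ^ 2 * f n) \<longlonglongrightarrow> 0"
proof -
  define B where "B = max (f 1) (f 2)"
  have decay: "f n \<le> B / ((real n - 2) * (real n - 4) * (real n - 6))" if "n \<ge> 7" for n
  proof -
    define j where "j = n - 6"
    then have n: "n = j + 6" and j: "j \<ge> 1" using \<open>n \<ge> 7\<close> by auto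
    have "f n * ((real n - 2) * (real n - 4) * (real n - 6)) \<le> B"
      using two_step_decay_cubic[of j] two_step_decay_bounded[OF j] n
      by (simp add: B_def algebra_simps)
    moreover have "(real n - 2) * (real n - 4) * (real n - 6) > 0" using \<open>n \<ge> 7\<close> by simp
    ultimately show ?thesis by (simp add: pos_le_divide_eq)
  qed
  show ?thesis
  proof (rule tendsto_sandwich[of "\<lambda>_. 0" _ _ "\<lambda>n. B * real n ^ 2 / ((real n - 2) * (real n - 4) * (real n - 6))"])
    show "eventually (\<lambda>n. 0 \<le> real n ^ 2 * f n) sequentially" using nonneg by simp
    show "eventually (\<lambda>n. real n ^ 2 * f n \<le> B * real n ^ 2 / ((real n - 2) * (real n - 4) * (real n - 6))) sequentially"
      using eventually_ge_at_top[of 7]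
    proof eventually_elim
      case (elim n)
      have "real n ^ 2 * f n \<le> real n ^ 2 * (B / ((real n - 2) * (real n - 4) * (real n - 6)))"
        by (rule mult_left_mono[OF decay[OF elim]]) simp
      then show ?case by (simp add: mult.commute)
    qed
    show "(\<lambda>n. B * real n ^ 2 / ((real n - 2) * (real n - 4) * (real n - 6))) \<longlonglongrightarrow> 0"
      by real_asymp
  qed simp
qed

end

lemma tendsto_invariant_bound_over_odd_dfact:
  "(\<lambda>n. real n ^ 2 * (real (invariant_bound n) / real (odd_dfact n))) \<longlonglongrightarrow> 0"
proof (rule tendsto_square_mult_two_step_decay)
  fix m :: nat
  let ?c = "(2*m + 1) * (2*m + 3)"
  have "invariant_bound (Suc (Suc m)) * m \<le> (4*m + 7) * invariant_bound m * m"
    using invariant_bound_Suc_Suc_le[of m] by simp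
  also have "\<dots> \<le> ?c * invariant_bound m"
    by (simp add: algebra_simps)
  finally have le: "real (invariant_bound (Suc (Suc m)) * m) \<le> real (?c * invariant_bound m)"
    by (rule of_nat_mono)
  have c: "real ?c > 0" by (simp only: of_nat_0_less_iff) simp
  have "odd_dfact (Suc (Suc m)) = ?c * odd_dfact m"
    by (simp add: odd_dfact_Suc algebra_simps)
  then have "real (invariant_bound (Suc (Suc m))) / real (odd_dfact (Suc (Suc m))) * real m
      = real (invariant_bound (Suc (Suc m)) * m) / (real ?c * real (odd_dfact m))"
    by simp
  also have "\<dots> \<le> real (?c * invariant_bound m) / (real ?c * real (odd_dfact m))"
    by (rule divide_right_mono[OF le]) simp
  also have "\<dots> = real (invariant_bound m) / real (odd_dfact m)"
    using c by simp
  finally show "real (invariant_bound (Suc (Suc m))) / real (odd_dfact (Suc (Suc m))) * real m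
      \<le> real (invariant_bound m) / real (odd_dfact m)" .
qed simp

lemma asymp_equiv_sandwich_error:
  fixes f L e :: "nat \<Rightarrow> real"
  assumes bounds: "eventually (\<lambda>n. L n \<le> f n \<and> f n \<le> L n + e n) at_top"
    and nonzero: "eventually (\<lambda>n. L n \<noteq> 0) at_top"
    and error: "(\<lambda>n. e n / L n) \<longlonglongrightarrow> 0"
  shows "f \<sim>[at_top] L"
proof (rule asymp_equiv_sandwich_real[OF asymp_equiv_refl])
  have "eventually (\<lambda>n. 1 + e n / L n = (L n + e n) / L n) at_top"
    using nonzero by eventually_elim (simp add: field_simps)
  moreover have "(\<lambda>n. 1 + e n / L n) \<longlonglongrightarrow> 1"
    using tendsto_add[OF tendsto_const error] by simp
  ultimately show "(\<lambda>n. L n + e n) \<sim>[at_top] L"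
    by (intro asymp_equivI') (rule tendsto_cong[THEN iffD1])
  show "eventually (\<lambda>n. f n \<in> {L n..L n + e n}) at_top"
    using bounds by simp
qed

lemma d_num_ge:
  assumes "n \<ge> 1"
  shows "real (odd_dfact n) / (4 * real n) \<le> real (d_num n)"
proof -
  have "real (odd_dfact n) \<le> real (4 * n * d_num n)"
    using odd_dfact_le_mult_d_num[OF assms] by (rule of_nat_mono)
  then show ?thesis using assms by (simp add: divide_le_eq mult.commute)
qed

lemma d_num_le:
  assumes "n \<ge> 2"
  shows "real (d_num n) \<le> real (odd_dfact n) / (4 * real n) + 4 * real n * real (invariant_bound n)"
proof -
  have "real (4 * n * d_num n) \<le> real (4 * n * (4 * n * invariant_bound n) + odd_dfact n)"
    using mult_d_num_le[OF assms] by (rule of_nat_mono)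
  then show ?thesis using assms by (simp add: field_simps)
qed

theorem corollary2:
  shows "(\<forall>n\<ge>1. real (d_num n) \<ge> real (odd_dfact n) / (4 * real n)) \<and>
         (\<lambda>n. real (d_num n)) \<sim>[at_top] (\<lambda>n. real (odd_dfact n) / (4 * real n))"
proof
  show "\<forall>n\<ge>1. real (d_num n) \<ge> real (odd_dfact n) / (4 * real n)"
    using d_num_ge by blast
  let ?L = "\<lambda>n. real (odd_dfact n) / (4 * real n)"
  let ?e = "\<lambda>n. 4 * real n * real (invariant_bound n)"
  show "(\<lambda>n. real (d_num n)) \<sim>[at_top] ?L"
  proof (rule asymp_equiv_sandwich_error)
    show "eventually (\<lambda>n. ?L n \<le> real (d_num n) \<and> real (d_num n) \<le> ?L n + ?e n) at_top"
      using eventually_ge_at_top[of 2] by eventually_elim (simp add: d_num_ge d_num_le)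
    show "eventually (\<lambda>n. ?L n \<noteq> 0) at_top"
      using eventually_ge_at_top[of 1] by eventually_elim (simp add: odd_dfact_pos)
    have "eventually (\<lambda>n. 16 * (real n ^ 2 * (real (invariant_bound n) / real (odd_dfact n)))
        = ?e n / ?L n) at_top"
      using eventually_ge_at_top[of 1] by eventually_elim (simp add: power2_eq_square)
    then show "(\<lambda>n. ?e n / ?L n) \<longlonglongrightarrow> 0"
      using tendsto_mult_right_zero[OF tendsto_invariant_bound_over_odd_dfact, of 16]
      by (rule tendsto_cong[THEN iffD1])
  qed
qed

end
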